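(* For every $t\ge0$, $k\ge1$, every collection $\Omega$ of functions and every collection $\Theta$ of aggregation functions: (1) $\rho_1\bigl(\mathsf{cr}^{(t)}\bigr)\subseteq\rho_1\bigl(\mathsf{GTL}_2^{(t)}(\Omega,\Theta)\bigr)$; (2) $\rho_1\bigl(\mathsf{vwl}_k^{(t)}\bigr)\subseteq\rho_1\bigl(\mathsf{TL}_{k+1}^{(t)}(\Omega,\Theta)\bigr)$; (3) $\rho_0\bigl(\mathsf{gwl}_k^{(t)}\bigr)\subseteq\rho_0\bigl(\mathsf{TL}_{k+1}^{(t+1)}(\Omega,\Theta)\bigr)$.
   Context: Fix integers $n\ge1$, $\ell\ge1$. A graph is $G=(V_G,E_G,\mathrm{col}_G)$ with $V_G=[n]$, $E_G$ a set of unordered pairs of distinct vertices, $\mathrm{col}_G:V_G\to\mathbb R^\ell$; $N_G(v)=\{u:uv\in E_G\}$. Extended tensor language $\mathsf{TL}(\Omega,\Theta)$: $\Omega$ is a collection of functions $f:\mathbb R^p\to\mathbb R$; $\Theta$ a collection of aggregation functions $F$, each assigning a real number to every finite multiset of reals. Expressions: $\varphi::=\mathbf 1_{x=y}\mid \mathbf 1_{x\neq y}\mid E(x,y)\mid P_s(x)\mid \varphi\cdot\varphi\mid \varphi+\varphi\mid a\cdot\varphi\mid f(\varphi_1,\dots,\varphi_p)\mid \sum_x\varphi\mid \mathrm{aggr}^F_{x_j}(\varphi)\mid\mathrm{aggr}^F_{x_j}(\varphi\mid E(x_i,x_j))$ with $F\in\Theta$, where in the last construct $\varphi$ has no free variable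 other than $x_j$. Free variables as usual, with $\mathrm{free}(\mathrm{aggr}^F_{x_j}(\varphi))=\mathrm{free}(\varphi)\setminus\{x_j\}$ and $\mathrm{free}(\mathrm{aggr}^F_{x_j}(\varphi\mid E(x_i,x_j)))=\{x_i\}$. Semantics: $E$ adjacency indicator, $P_s(x)=\mathrm{col}_G(\nu(x))_s$, $\mathbf 1_{x\,\mathrm{op}\,y}$ (dis)equality indicator, $\cdot,+,a\cdot,f$ pointwise, $[\![\sum_x\varphi]\!]^\nu_G=\sum_{v\in V_G}[\![\varphi]\!]^{\nu[x\mapsto v]}_G$, $[\![\mathrm{aggr}^F_{x_j}(\varphi)]\!]^\nu_G=F(\{\!\{[\![\varphi]\!]^{\nu[x_j\mapsto v]}_G:v\in V_G\}\!\})$, $[\![\mathrm{aggr}^F_{x_j}(\varphi\mid E(x_i,x_j))]\!]^\nu_G=F(\{\!\{[\![\varphi]\!]^{\nu[x_j\mapsto v]}_G:v\in N_G(\nu(x_i))\}\!\})$. Aggregation depth: $0$ for atoms, max for $\cdot,+,f(\dots)$, unchanged by $a\cdot$, and $+1$ for $\sum_x$ and both aggregation constructs. $\mathsf{TL}_{k}^{(t)}(\Omega,\Theta)$: expressions using only variables $x_1,\dots,x_k$ (re-binding allowed) with aggregation depth $\le t$. Guarded fragment $\mathsf{GTL}_2(\Omega,\Theta)$: expressions with exactly one free variable ($x_1$ or $x_2$), built from $\mathbf 1_{x_i=x_i}$, $\mathbf 1_{x_i\ne x_i}$, $P_s(x_i)$ by $\cdot$, $+$ of expressions with the same single free variable,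 $a\cdot$, $f(\varphi_1,\dots,\varphi_p)$ with all $\varphi_j$ sharing the same single free variable, $\sum_{x_j}(E(x_i,x_j)\cdot\varphi)$ and $\mathrm{aggr}^F_{x_j}(\varphi\mid E(x_i,x_j))$ with $\{i,j\}=\{1,2\}$ and $\varphi$ with free variable $x_j$; $\mathsf{GTL}_2^{(t)}(\Omega,\Theta)$ those of aggregation depth $\le t$. For a set $\mathcal L$ of expressions, $\rho_1(\mathcal L)$ is the set of pairs $((G,v),(H,w))$ with $[\![\varphi]\!]^{x_1\mapsto v}_G=[\![\varphi]\!]^{x_1\mapsto w}_H$ for all $\varphi\in\mathcal L$ with free variables among $\{x_1\}$; $\rho_0(\mathcal L)$ the set of pairs of graphs agreeing on all closed expressions of $\mathcal L$. Color refinement: $\mathsf{cr}^{(0)}(G,v)=\mathrm{col}_G(v)$, $\mathsf{cr}^{(t+1)}(G,v)=(\mathsf{cr}^{(t)}(G,v),\{\!\{\mathsf{cr}^{(t)}(G,u):u\in N_G(v)\}\!\})$. $k$-WL: $\mathsf{atp}_k(G,\mathbf v)$ records for $i<j$ whether $v_i=v_j$ and whether $v_iv_j\in E_G$, and all $\mathrm{col}_G(v_i)$; $\mathsf{wl}_k^{(0)}=\mathsf{atp}_k$, $\mathsf{wl}_k^{(t+1)}(G,\mathbf v)=(\mathsf{wl}_k^{(t)}(G,\mathbf v),\{\!\{(\mathsf{atp}_{k+1}(G,(v_1,\dots,v_k,u)),\mathsf{wl}_k^{(t)}(G,\mathbf v[u/1]),\dots,\mathsf{wl}_k^{(t)}(G,\mathbf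 v[u/k])):u\in V_G\}\!\})$ ($\mathbf v[u/i]$ replaces the $i$-th entry by $u$); $\mathsf{vwl}_k^{(t)}(G,v)=\mathsf{wl}_k^{(t)}(G,(v,\dots,v))$; $\mathsf{gwl}_k^{(t)}(G)=\{\!\{\mathsf{wl}_k^{(t)}(G,\mathbf v):\mathbf v\in V_G^k\}\!\}$. Labels compared as formal objects; $\rho_1(\mathsf{cr}^{(t)})$, $\rho_1(\mathsf{vwl}_k^{(t)})$, $\rho_0(\mathsf{gwl}_k^{(t)})$ are the pairs with equal labels. *)

theory Defs
  imports Complex_Main "HOL-Library.Multiset"
begin

text \<open>A graph on the vertex set [n] = {1..n}: a set of unordered pairs (2-element sets)
  of distinct vertices, and a colouring assigning to each vertex a real vector of length l
  (represented as a list).\<close>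

type_synonym graph = "nat set set \<times> (nat \<Rightarrow> real list)"

definition verts :: "nat \<Rightarrow> nat set" where
  "verts n = {1..n}"

definition edges :: "graph \<Rightarrow> nat set set" where
  "edges G = fst G"

definition col :: "graph \<Rightarrow> nat \<Rightarrow> real list" where
  "col G = snd G"

definition wf_graph :: "nat \<Rightarrow> nat \<Rightarrow> graph \<Rightarrow> bool" where
  "wf_graph n l G \<longleftrightarrow>
     edges G \<subseteq> {{u, v} | u v. u \<in> verts n \<and> v \<in> verts n \<and> u \<noteq> v} \<and>
     (\<forall>v \<in> verts n. length (col G v) = l)"

definition adj :: "graph \<Rightarrow> nat \<Rightarrow> nat \<Rightarrow> bool" where
  "adj G u v \<longleftrightarrow> {u, v} \<in> edges G"

definition nbrs :: "nat \<Rightarrow> graph \<Rightarrow> nat \<Rightarrow> nat set" where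
  "nbrs n G v = {u \<in> verts n. adj G v u}"

text \<open>Fun f args stands for f(args) (f a function R^p -> R with p = length args, given on lists);
  Aggr F j phi is aggr^F_{x_j}(phi); AggrN F i j phi is aggr^F_{x_j}(phi | E(x_i,x_j));
  Pcol s x is P_s(x) with 0-based coordinate index s < l.\<close>

datatype tl =
    EqV nat nat
  | NeqV nat nat
  | Edge nat nat
  | Pcol nat nat
  | Mul tl tl
  | Add tl tl
  | Scal real tl
  | Fun "real list \<Rightarrow> real" "tl list"
  | Sum nat tl
  | Aggr "real multiset \<Rightarrow> real" nat tl
  | AggrN "real multiset \<Rightarrow> real" nat nat tl

fun fv :: "tl \<Rightarrow> nat set" where
  "fv (EqV x y) = {x, y}"
| "fv (NeqV x y) = {x, y}"
| "fv (Edge x y) = {x, y}"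
| "fv (Pcol s x) = {x}"
| "fv (Mul a b) = fv a \<union> fv b"
| "fv (Add a b) = fv a \<union> fv b"
| "fv (Scal c a) = fv a"
| "fv (Fun f args) = \<Union> (set (map fv args))"
| "fv (Sum x a) = fv a - {x}"
| "fv (Aggr F x a) = fv a - {x}"
| "fv (AggrN F i j a) = {i}"

fun vars :: "tl \<Rightarrow> nat set" where
  "vars (EqV x y) = {x, y}"
| "vars (NeqV x y) = {x, y}"
| "vars (Edge x y) = {x, y}"
| "vars (Pcol s x) = {x}"
| "vars (Mul a b) = vars a \<union> vars b"
| "vars (Add a b) = vars a \<union> vars b"
| "vars (Scal c a) = vars a"
| "vars (Fun f args) = \<Union> (set (map vars args))"
| "vars (Sum x a) = insert x (vars a)"
| "vars (Aggr F x a) = insert x (vars a)"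
| "vars (AggrN F i j a) = {i, j} \<union> vars a"

fun depth :: "tl \<Rightarrow> nat" where
  "depth (EqV x y) = 0"
| "depth (NeqV x y) = 0"
| "depth (Edge x y) = 0"
| "depth (Pcol s x) = 0"
| "depth (Mul a b) = max (depth a) (depth b)"
| "depth (Add a b) = max (depth a) (depth b)"
| "depth (Scal c a) = depth a"
| "depth (Fun f args) = fold max (map depth args) 0"
| "depth (Sum x a) = Suc (depth a)"
| "depth (Aggr F x a) = Suc (depth a)"
| "depth (AggrN F i j a) = Suc (depth a)"

text \<open>Well-formedness w.r.t. the colour dimension l, the function collection Omega
  (pairs (p, f) with f : R^p -> R given on lists of length p) and the aggregation
  collection Theta.\<close>
fun wf_tl :: "nat \<Rightarrow> (nat \<times> (real list \<Rightarrow> real)) set \<Rightarrow> (real multiset \<Rightarrow> real) set \<Rightarrow> tl \<Rightarrow> bool" where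
  "wf_tl l Om Th (EqV x y) = True"
| "wf_tl l Om Th (NeqV x y) = True"
| "wf_tl l Om Th (Edge x y) = True"
| "wf_tl l Om Th (Pcol s x) = (s < l)"
| "wf_tl l Om Th (Mul a b) = (wf_tl l Om Th a \<and> wf_tl l Om Th b)"
| "wf_tl l Om Th (Add a b) = (wf_tl l Om Th a \<and> wf_tl l Om Th b)"
| "wf_tl l Om Th (Scal c a) = wf_tl l Om Th a"
| "wf_tl l Om Th (Fun f args) = ((length args, f) \<in> Om \<and> (\<forall>a \<in> set args. wf_tl l Om Th a))"
| "wf_tl l Om Th (Sum x a) = wf_tl l Om Th a"
| "wf_tl l Om Th (Aggr F x a) = (F \<in> Th \<and> wf_tl l Om Th a)"
| "wf_tl l Om Th (AggrN F i j a) = (F \<in> Th \<and> fv a \<subseteq> {j} \<and> wf_tl l Om Th a)"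

fun sem :: "nat \<Rightarrow> graph \<Rightarrow> (nat \<Rightarrow> nat) \<Rightarrow> tl \<Rightarrow> real" where
  "sem n G \<nu> (EqV x y) = (if \<nu> x = \<nu> y then 1 else 0)"
| "sem n G \<nu> (NeqV x y) = (if \<nu> x \<noteq> \<nu> y then 1 else 0)"
| "sem n G \<nu> (Edge x y) = (if adj G (\<nu> x) (\<nu> y) then 1 else 0)"
| "sem n G \<nu> (Pcol s x) = col G (\<nu> x) ! s"
| "sem n G \<nu> (Mul a b) = sem n G \<nu> a * sem n G \<nu> b"
| "sem n G \<nu> (Add a b) = sem n G \<nu> a + sem n G \<nu> b"
| "sem n G \<nu> (Scal c a) = c * sem n G \<nu> a"
| "sem n G \<nu> (Fun f args) = f (map (sem n G \<nu>) args)"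
| "sem n G \<nu> (Sum x a) = (\<Sum>v \<in> verts n. sem n G (\<nu>(x := v)) a)"
| "sem n G \<nu> (Aggr F x a) = F (image_mset (\<lambda>v. sem n G (\<nu>(x := v)) a) (mset_set (verts n)))"
| "sem n G \<nu> (AggrN F i j a) =
     F (image_mset (\<lambda>v. sem n G (\<nu>(j := v)) a) (mset_set (nbrs n G (\<nu> i))))"

definition TL :: "nat \<Rightarrow> (nat \<times> (real list \<Rightarrow> real)) set \<Rightarrow> (real multiset \<Rightarrow> real) set
                  \<Rightarrow> nat \<Rightarrow> nat \<Rightarrow> tl set" where
  "TL l Om Th k t = {\<phi>. wf_tl l Om Th \<phi> \<and> vars \<phi> \<subseteq> {1..k} \<and> depth \<phi> \<le> t}"

text \<open>Guarded fragment GTL_2: gtl2 l Om Th i phi means phi is a guarded expression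
  whose single free variable is x_i (i \<in> {1,2}).\<close>
inductive gtl2 :: "nat \<Rightarrow> (nat \<times> (real list \<Rightarrow> real)) set \<Rightarrow> (real multiset \<Rightarrow> real) set
                   \<Rightarrow> nat \<Rightarrow> tl \<Rightarrow> bool"
  for l Om Th where
  g_eq: "i \<in> {1, 2} \<Longrightarrow> gtl2 l Om Th i (EqV i i)"
| g_neq: "i \<in> {1, 2} \<Longrightarrow> gtl2 l Om Th i (NeqV i i)"
| g_col: "i \<in> {1, 2} \<Longrightarrow> s < l \<Longrightarrow> gtl2 l Om Th i (Pcol s i)"
| g_mul: "gtl2 l Om Th i a \<Longrightarrow> gtl2 l Om Th i b \<Longrightarrow> gtl2 l Om Th i (Mul a b)"
| g_add: "gtl2 l Om Th i a \<Longrightarrow> gtl2 l Om Th i b \<Longrightarrow> gtl2 l Om Th i (Add a b)"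
| g_scal: "gtl2 l Om Th i a \<Longrightarrow> gtl2 l Om Th i (Scal c a)"
| g_fun: "(length args, f) \<in> Om \<Longrightarrow> args \<noteq> [] \<Longrightarrow> (\<forall>a \<in> set args. gtl2 l Om Th i a)
          \<Longrightarrow> gtl2 l Om Th i (Fun f args)"
| g_sum: "{i, j} = {1, 2} \<Longrightarrow> gtl2 l Om Th j a \<Longrightarrow> gtl2 l Om Th i (Sum j (Mul (Edge i j) a))"
| g_aggr: "{i, j} = {1, 2} \<Longrightarrow> F \<in> Th \<Longrightarrow> gtl2 l Om Th j a \<Longrightarrow> gtl2 l Om Th i (AggrN F i j a)"

definition GTL2 :: "nat \<Rightarrow> (nat \<times> (real list \<Rightarrow> real)) set \<Rightarrow> (real multiset \<Rightarrow> real) set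
                    \<Rightarrow> nat \<Rightarrow> tl set" where
  "GTL2 l Om Th t = {\<phi>. (\<exists>i. gtl2 l Om Th i \<phi>) \<and> depth \<phi> \<le> t}"

datatype crlab = CR0 "real list" | CRS crlab "crlab multiset"

fun cr :: "nat \<Rightarrow> nat \<Rightarrow> graph \<Rightarrow> nat \<Rightarrow> crlab" where
  "cr n 0 G v = CR0 (col G v)"
| "cr n (Suc t) G v = CRS (cr n t G v) (image_mset (cr n t G) (mset_set (nbrs n G v)))"

type_synonym atype = "(bool \<times> bool) list \<times> real list list"

definition atp :: "graph \<Rightarrow> nat list \<Rightarrow> atype" where
  "atp G vs = ([(vs ! i = vs ! j, adj G (vs ! i) (vs ! j)). i \<leftarrow> [0..<length vs], j \<leftarrow> [Suc i..<length vs]],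
               map (col G) vs)"

datatype wllab = WL0 atype | WLS wllab "(atype \<times> wllab list) multiset"

text \<open>wl n t G vs = wl_k^{(t)}(G, vs) for k = length vs; vs[i := u] is v[u/(i+1)].\<close>
fun wl :: "nat \<Rightarrow> nat \<Rightarrow> graph \<Rightarrow> nat list \<Rightarrow> wllab" where
  "wl n 0 G vs = WL0 (atp G vs)"
| "wl n (Suc t) G vs = WLS (wl n t G vs)
     (image_mset (\<lambda>u. (atp G (vs @ [u]), map (\<lambda>i. wl n t G (vs[i := u])) [0..<length vs]))
        (mset_set (verts n)))"

definition vwl :: "nat \<Rightarrow> nat \<Rightarrow> nat \<Rightarrow> graph \<Rightarrow> nat \<Rightarrow> wllab" where
  "vwl n k t G v = wl n t G (replicate k v)"

definition gwl :: "nat \<Rightarrow> nat \<Rightarrow> nat \<Rightarrow> graph \<Rightarrow> wllab multiset" where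
  "gwl n k t G = image_mset (wl n t G) (mset_set {vs. length vs = k \<and> set vs \<subseteq> verts n})"

definition rho1_lab :: "nat \<Rightarrow> nat \<Rightarrow> (graph \<Rightarrow> nat \<Rightarrow> 'a) \<Rightarrow> ((graph \<times> nat) \<times> (graph \<times> nat)) set" where
  "rho1_lab n l lab = {((G, v), (H, w)). wf_graph n l G \<and> wf_graph n l H \<and>
      v \<in> verts n \<and> w \<in> verts n \<and> lab G v = lab H w}"

definition rho0_lab :: "nat \<Rightarrow> nat \<Rightarrow> (graph \<Rightarrow> 'a) \<Rightarrow> (graph \<times> graph) set" where
  "rho0_lab n l lab = {(G, H). wf_graph n l G \<and> wf_graph n l H \<and> lab G = lab H}"

text \<open>[[phi]]^{x_1 -> v}: since only expressions with free variables among {x_1} are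
  considered, the valuation can map every variable to v.\<close>
definition rho1_tl :: "nat \<Rightarrow> nat \<Rightarrow> tl set \<Rightarrow> ((graph \<times> nat) \<times> (graph \<times> nat)) set" where
  "rho1_tl n l L = {((G, v), (H, w)). wf_graph n l G \<and> wf_graph n l H \<and>
      v \<in> verts n \<and> w \<in> verts n \<and>
      (\<forall>\<phi> \<in> L. fv \<phi> \<subseteq> {1} \<longrightarrow> sem n G (\<lambda>_. v) \<phi> = sem n H (\<lambda>_. w) \<phi>)}"

definition rho0_tl :: "nat \<Rightarrow> nat \<Rightarrow> tl set \<Rightarrow> (graph \<times> graph) set" where
  "rho0_tl n l L = {(G, H). wf_graph n l G \<and> wf_graph n l H \<and>
      (\<forall>\<phi> \<in> L. fv \<phi> = {} \<longrightarrow> sem n G (\<lambda>_. 1) \<phi> = sem n H (\<lambda>_. 1) \<phi>)}"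

end

theory Submission
  imports Defs "HOL-Combinatorics.Transposition"
begin

(* All three claims are proved by induction on expressions.
   (1) The value of a guarded expression in its free variable x_i depends only on the
   colour-refinement label of the vertex assigned to x_i: guarded sums and aggregations range
   over the neighbours, whose multiset of labels is recorded by one refinement round.
   (2) More generally, the value of a TL_{k+1} expression of depth <= t under an assignment into
   a (k+1)-tuple (v_1,...,v_k,u) is determined by the atomic type of the tuple together with the
   level-t k-WL labels of its k+1 faces, the k-tuples obtained by dropping one entry (u moving
   into the vacated position). At a binder at most k of the k+1 variables stay free, so some
   entry is unused; one more WL round at the face dropping it records, for every choice of the
   bound vertex, the same data for the extended tuple.
   (3) A closed expression of depth <= t+1 is built from sums and aggregations over all vertices
   of expressions of depth <= t in one variable. By (2) their values are determined by the
   diagonal labels wl(v,...,v), and the multiset of these is part of gwl, because the atomic type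
   stored in a label tells whether the tuple is constant. *)

lemma image_mset_eq_iff_rel_mset:
  "image_mset f M = image_mset g N \<longleftrightarrow> rel_mset (\<lambda>x y. f x = g y) M N"
  by (simp add: multiset.rel_map multiset.rel_eq[symmetric])

lemma rel_mset_filter_mset:
  assumes "rel_mset R M N" and "\<And>x y. x \<in># M \<Longrightarrow> y \<in># N \<Longrightarrow> R x y \<Longrightarrow> P x \<longleftrightarrow> Q y"
  shows "rel_mset R (filter_mset P M) (filter_mset Q N)"
  using assms by (induction rule: rel_mset_induct) (auto intro: rel_mset_Plus)

lemma image_mset_eq_transfer:
  assumes "image_mset f M = image_mset g N"
    and "\<And>x y. x \<in># M \<Longrightarrow> y \<in># N \<Longrightarrow> f x = g y \<Longrightarrow> f' x = g' y"
  shows "image_mset f' M = image_mset g' N"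
  using assms unfolding image_mset_eq_iff_rel_mset by (rule multiset.rel_mono_strong)

lemma image_mset_filter_eq_transfer:
  assumes "image_mset f M = image_mset g N"
    and "\<And>x y. x \<in># M \<Longrightarrow> y \<in># N \<Longrightarrow> f x = g y \<Longrightarrow> P x \<longleftrightarrow> Q y"
  shows "image_mset f (filter_mset P M) = image_mset g (filter_mset Q N)"
  using assms unfolding image_mset_eq_iff_rel_mset by (rule rel_mset_filter_mset)

lemma finite_verts [simp]: "finite (verts n)"
  by (simp add: verts_def)

lemma finite_nbrs [simp]: "finite (nbrs n G v)"
  by (simp add: nbrs_def)

lemma mset_set_nbrs: "mset_set (nbrs n G v) = filter_mset (adj G v) (mset_set (verts n))"
  by (simp add: nbrs_def)

lemma adj_commute: "adj G u v \<longleftrightarrow> adj G v u"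
  by (simp add: adj_def insert_commute)

lemma not_adj_self: "wf_graph n l G \<Longrightarrow> \<not> adj G v v"
  by (auto simp: wf_graph_def adj_def doubleton_eq_iff)

lemma sum_adj_weighted:
  "(\<Sum>z\<in>verts n. (if adj G v z then 1 else 0) * f z) = (\<Sum>z\<in>#mset_set (nbrs n G v). f z :: real)"
proof -
  have "(\<Sum>z\<in>verts n. (if adj G v z then 1 else 0) * f z) = (\<Sum>z\<in>verts n. if adj G v z then f z else 0)"
    by (rule sum.cong) auto
  also have "\<dots> = sum f (nbrs n G v)"
    by (simp add: sum.inter_filter nbrs_def)
  finally show ?thesis
    by (simp add: sum_unfold_sum_mset)
qed

lemma depth_arg_le:
  assumes "a \<in> set args"
  shows "depth a \<le> depth (Fun f args)"
proof -
  have "depth a \<le> Max (set (0 # map depth args))"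
    using assms by simp
  then show ?thesis
    by (simp only: Max.set_eq_fold depth.simps)
qed

lemma sem_Fun_cong:
  "(\<And>a. a \<in> set args \<Longrightarrow> sem n G \<nu> a = sem n H \<mu> a) \<Longrightarrow> sem n G \<nu> (Fun f args) = sem n H \<mu> (Fun f args)"
  by (simp cong: map_cong)

lemma fv_subset_vars: "fv \<phi> \<subseteq> vars \<phi>"
  by (induction \<phi>) auto

lemma sem_cong_fv:
  "wf_tl l Om Th \<phi> \<Longrightarrow> \<forall>x\<in>fv \<phi>. \<nu> x = \<mu> x \<Longrightarrow> sem n G \<nu> \<phi> = sem n G \<mu> \<phi>"
proof (induction \<phi> arbitrary: \<nu> \<mu>)
  case (Fun f args)
  then have "map (sem n G \<nu>) args = map (sem n G \<mu>) args"
    by (auto intro: map_cong)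
  then show ?case
    by (simp only: sem.simps)
next
  case (AggrN F i j a)
  then have "sem n G (\<nu>(j := v)) a = sem n G (\<mu>(j := v)) a" for v
    by (metis fun_upd_same singletonD subsetD wf_tl.simps(11))
  then show ?case
    using AggrN.prems by simp
next
  case (Aggr F x a)
  then have "sem n G (\<nu>(x := v)) a = sem n G (\<mu>(x := v)) a" for v
    by auto
  then show ?case
    by simp
next
  case (Sum x a)
  then show ?case
    by (auto intro!: sum.cong)
next
  case (Mul a b)
  then have "sem n G \<nu> a = sem n G \<mu> a" "sem n G \<nu> b = sem n G \<mu> b"
    by (auto intro!: Mul.IH)
  then show ?case
    by simp
next
  case (Add a b)
  then have "sem n G \<nu> a = sem n G \<mu> a" "sem n G \<nu> b = sem n G \<mu> b"
    by (auto intro!: Add.IH)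
  then show ?case
    by simp
qed auto

section \<open>Colour refinement and the guarded fragment\<close>

lemma cr_eq_imp_col_eq: "cr n t G v = cr n t H w \<Longrightarrow> col G v = col H w"
  by (induction t) auto

lemma nbr_values_eq_if_cr_eq:
  assumes "cr n (Suc t) G (\<nu> i) = cr n (Suc t) H (\<mu> i)"
    and "\<And>\<nu> \<mu>. cr n t G (\<nu> j) = cr n t H (\<mu> j) \<Longrightarrow> sem n G \<nu> a = sem n H \<mu> a"
  shows "image_mset (\<lambda>z. sem n G (\<nu>(j := z)) a) (mset_set (nbrs n G (\<nu> i)))
       = image_mset (\<lambda>z. sem n H (\<mu>(j := z)) a) (mset_set (nbrs n H (\<mu> i)))"
proof (rule image_mset_eq_transfer[where f = "cr n t G" and g = "cr n t H"])
  show "image_mset (cr n t G) (mset_set (nbrs n G (\<nu> i))) = image_mset (cr n t H) (mset_set (nbrs n H (\<mu> i)))"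
    using assms(1) by simp
  fix z z' assume "cr n t G z = cr n t H z'"
  then show "sem n G (\<nu>(j := z)) a = sem n H (\<mu>(j := z')) a"
    by (intro assms(2)) simp
qed

lemma gtl2_sem_eq_if_cr_eq:
  "gtl2 l Om Th i \<phi> \<Longrightarrow> depth \<phi> \<le> t \<Longrightarrow> cr n t G (\<nu> i) = cr n t H (\<mu> i)
   \<Longrightarrow> sem n G \<nu> \<phi> = sem n H \<mu> \<phi>"
proof (induction i \<phi> arbitrary: t \<nu> \<mu> rule: gtl2.induct)
  case (g_col i s)
  then show ?case
    using cr_eq_imp_col_eq by fastforce
next
  case (g_fun args f i)
  show ?case
  proof (rule sem_Fun_cong)
    fix a assume a: "a \<in> set args"
    then have "depth a \<le> t"
      using depth_arg_le[OF a, of f] g_fun.prems(1) by linarith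
    with a g_fun.IH g_fun.prems(2) show "sem n G \<nu> a = sem n H \<mu> a"
      by blast
  qed
next
  case (g_sum i j a)
  then obtain t' where "t = Suc t'" "depth a \<le> t'"
    by (cases t) auto
  with g_sum have "image_mset (\<lambda>z. sem n G (\<nu>(j := z)) a) (mset_set (nbrs n G (\<nu> i)))
      = image_mset (\<lambda>z. sem n H (\<mu>(j := z)) a) (mset_set (nbrs n H (\<mu> i)))"
    by (intro nbr_values_eq_if_cr_eq[where t = t']) simp_all
  moreover have "i \<noteq> j"
    using g_sum(1) by auto
  ultimately show ?case
    by (simp add: sum_adj_weighted)
next
  case (g_aggr i j F a)
  then obtain t' where "t = Suc t'" "depth a \<le> t'"
    by (cases t) auto
  with g_aggr have "image_mset (\<lambda>z. sem n G (\<nu>(j := z)) a) (mset_set (nbrs n G (\<nu> i)))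
      = image_mset (\<lambda>z. sem n H (\<mu>(j := z)) a) (mset_set (nbrs n H (\<mu> i)))"
    by (intro nbr_values_eq_if_cr_eq[where t = t']) simp_all
  then show ?case
    by simp
qed auto

lemma rho1_cr_subset_rho1_GTL2: "rho1_lab n l (cr n t) \<subseteq> rho1_tl n l (GTL2 l Om Th t)"
  by (auto simp: rho1_lab_def rho1_tl_def GTL2_def intro: gtl2_sem_eq_if_cr_eq)

definition index_pairs :: "nat \<Rightarrow> (nat \<times> nat) list" where
  "index_pairs N = [(i, j). i \<leftarrow> [0..<N], j \<leftarrow> [Suc i..<N]]"

lemma set_index_pairs: "set (index_pairs N) = {(i, j). i < j \<and> j < N}"
  by (fastforce simp: index_pairs_def)

lemma atp_index_pairs:
  "atp G vs = (map (\<lambda>(i, j). (vs ! i = vs ! j, adj G (vs ! i) (vs ! j))) (index_pairs (length vs)),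
               map (col G) vs)"
  by (simp add: atp_def index_pairs_def map_concat o_def)

lemma atp_eq_nth:
  assumes "atp G vs = atp H ws" "length vs = length ws" "p < length vs" "q < length vs"
    and "wf_graph n l G" "wf_graph n l H"
  shows "(vs ! p = vs ! q \<longleftrightarrow> ws ! p = ws ! q) \<and> (adj G (vs ! p) (vs ! q) \<longleftrightarrow> adj H (ws ! p) (ws ! q))
     \<and> col G (vs ! p) = col H (ws ! p)"
proof -
  have pairs: "(vs ! i = vs ! j \<longleftrightarrow> ws ! i = ws ! j) \<and> (adj G (vs ! i) (vs ! j) \<longleftrightarrow> adj H (ws ! i) (ws ! j))"
    if "i < j" "j < length vs" for i j
  proof -
    have "map (\<lambda>(i, j). (vs ! i = vs ! j, adj G (vs ! i) (vs ! j))) (index_pairs (length vs))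
        = map (\<lambda>(i, j). (ws ! i = ws ! j, adj H (ws ! i) (ws ! j))) (index_pairs (length vs))"
      using assms(1,2) by (simp add: atp_index_pairs)
    moreover have "(i, j) \<in> set (index_pairs (length vs))"
      using that by (simp add: set_index_pairs)
    ultimately show ?thesis
      unfolding map_eq_conv by fastforce
  qed
  have "map (col G) vs = map (col H) ws"
    using assms(1) by (simp add: atp_index_pairs)
  then have "col G (vs ! p) = col H (ws ! p)"
    using assms(2,3) by (metis nth_map)
  moreover have "(vs ! p = vs ! q \<longleftrightarrow> ws ! p = ws ! q) \<and> (adj G (vs ! p) (vs ! q) \<longleftrightarrow> adj H (ws ! p) (ws ! q))"
  proof (cases p q rule: linorder_cases)
    case less
    then show ?thesis
      using pairs assms(4) by blast
  next
    case equal
    then show ?thesis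
      using not_adj_self[OF assms(5)] not_adj_self[OF assms(6)] by simp
  next
    case greater
    then show ?thesis
      using pairs[of q p] assms(3) adj_commute by metis
  qed
  ultimately show ?thesis
    by blast
qed

lemma atp_replicate_eq:
  assumes "wf_graph n l G" "wf_graph n l H" "col G z = col H z'"
  shows "atp G (replicate N z) = atp H (replicate N z')"
  using assms not_adj_self[OF assms(1)] not_adj_self[OF assms(2)]
  by (auto simp: atp_index_pairs set_index_pairs intro!: map_cong)

fun lab_atp :: "wllab \<Rightarrow> atype" where
  "lab_atp (WL0 a) = a"
| "lab_atp (WLS c M) = lab_atp c"

lemma lab_atp_wl: "lab_atp (wl n t G vs) = atp G vs"
  by (induction t) auto

section \<open>Faces of a tuple and one step of k-WL\<close>

text \<open>For length vs = k, face vs u m (m \<le> k) is the k-tuple obtained from vs @ [u] by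
  dropping the entry at position m; for m < k the entry u takes over the vacated position.\<close>
definition face :: "nat list \<Rightarrow> nat \<Rightarrow> nat \<Rightarrow> nat list" where
  "face vs u m = (if m = length vs then vs else vs[m := u])"

text \<open>The atomic type of vs @ [u] together with the level-t labels of its faces. Its first two
  components are what the WL round at vs records for u.\<close>
definition ext_lab :: "nat \<Rightarrow> nat \<Rightarrow> graph \<Rightarrow> nat list \<Rightarrow> nat \<Rightarrow> atype \<times> wllab list \<times> wllab" where
  "ext_lab n t G vs u =
     (atp G (vs @ [u]), map (\<lambda>i. wl n t G (vs[i := u])) [0..<length vs], wl n t G vs)"

lemma length_face [simp]: "length (face vs u m) = length vs"
  by (simp add: face_def)

lemma ext_lab_eq_nth:
  assumes "ext_lab n t G vs u = ext_lab n t H ws w" "length vs = length ws"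
    "p \<le> length vs" "q \<le> length vs" "wf_graph n l G" "wf_graph n l H"
  shows "((vs @ [u]) ! p = (vs @ [u]) ! q \<longleftrightarrow> (ws @ [w]) ! p = (ws @ [w]) ! q)
     \<and> (adj G ((vs @ [u]) ! p) ((vs @ [u]) ! q) \<longleftrightarrow> adj H ((ws @ [w]) ! p) ((ws @ [w]) ! q))
     \<and> col G ((vs @ [u]) ! p) = col H ((ws @ [w]) ! p)"
  using assms by (intro atp_eq_nth[where n = n and l = l]) (auto simp: ext_lab_def)

lemma wl_face_eq_if_ext_lab_eq:
  assumes "ext_lab n t G vs u = ext_lab n t H ws w" "length vs = k" "length ws = k" "m \<le> k"
  shows "wl n t G (face vs u m) = wl n t H (face ws w m)"
proof (cases "m = k")
  case False
  with assms have "m \<in> set [0..<k]"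
    by simp
  moreover have "map (\<lambda>i. wl n t G (vs[i := u])) [0..<k] = map (\<lambda>i. wl n t H (ws[i := w])) [0..<k]"
    using assms by (simp add: ext_lab_def)
  ultimately show ?thesis
    using assms False unfolding map_eq_conv face_def by simp
qed (use assms in \<open>simp add: ext_lab_def face_def\<close>)

lemma ext_labs_eq_if_wl_Suc_eq:
  assumes "wl n (Suc t) G vs = wl n (Suc t) H ws" "length vs = length ws"
  shows "image_mset (ext_lab n t G vs) (mset_set (verts n)) = image_mset (ext_lab n t H ws) (mset_set (verts n))"
proof -
  from assms have wl_eq: "wl n t G vs = wl n t H ws"
    and round_eq: "image_mset (\<lambda>u. (atp G (vs @ [u]), map (\<lambda>i. wl n t G (vs[i := u])) [0..<length vs]))
        (mset_set (verts n))
      = image_mset (\<lambda>u. (atp H (ws @ [u]), map (\<lambda>i. wl n t H (ws[i := u])) [0..<length ws]))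
        (mset_set (verts n))"
    by simp_all
  show ?thesis
    by (rule image_mset_eq_transfer[OF round_eq]) (simp add: ext_lab_def wl_eq)
qed

lemma ext_labs_of_face_eq:
  assumes "ext_lab n (Suc t) G vs u = ext_lab n (Suc t) H ws w" "length vs = k" "length ws = k" "m \<le> k"
  shows "image_mset (ext_lab n t G (face vs u m)) (mset_set (verts n))
       = image_mset (ext_lab n t H (face ws w m)) (mset_set (verts n))"
  using assms by (intro ext_labs_eq_if_wl_Suc_eq wl_face_eq_if_ext_lab_eq) (simp_all add: face_def)

lemma nth_face_transpose:
  assumes "length vs = k" "m \<le> k" "p \<le> k" "p \<noteq> m"
  shows "(face vs u m @ [z]) ! transpose m k p = (vs @ [u]) ! p" and "transpose m k p < k"
  using assms by (auto simp: face_def transpose_def nth_append)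

lemma exists_unused_slot:
  fixes \<pi> :: "nat \<Rightarrow> nat"
  assumes "finite Y" "card Y \<le> k"
  obtains m where "m \<le> k" "m \<notin> \<pi> ` Y"
proof -
  have "card (\<pi> ` Y) < card {0..k}"
    using card_image_le[OF assms(1), of \<pi>] assms(2) by simp
  then have "\<not> {0..k} \<subseteq> \<pi> ` Y"
    using card_mono[of "\<pi> ` Y" "{0..k}"] assms(1) by auto
  then obtain m where "m \<in> {0..k}" "m \<notin> \<pi> ` Y"
    by blast
  then show ?thesis
    using that by simp
qed

section \<open>k-WL and TL_{k+1}\<close>

lemma binder_values_eq:
  assumes IH: "\<And>vs ws u w \<pi>. length vs = k \<Longrightarrow> length ws = k \<Longrightarrow> \<forall>y. \<pi> y \<le> k
      \<Longrightarrow> ext_lab n t G vs u = ext_lab n t H ws w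
      \<Longrightarrow> sem n G (\<lambda>y. (vs @ [u]) ! \<pi> y) \<psi> = sem n H (\<lambda>y. (ws @ [w]) ! \<pi> y) \<psi>"
    and wf: "wf_tl l Om Th \<psi>" and vars: "vars \<psi> \<subseteq> {1..Suc k}" and x: "x \<in> {1..Suc k}"
    and len: "length vs = k" "length ws = k" and \<pi>: "\<forall>y. \<pi> y \<le> k"
    and ext: "ext_lab n (Suc t) G vs u = ext_lab n (Suc t) H ws w"
  shows "image_mset (\<lambda>z. sem n G ((\<lambda>y. (vs @ [u]) ! \<pi> y)(x := z)) \<psi>) (mset_set (verts n))
       = image_mset (\<lambda>z. sem n H ((\<lambda>y. (ws @ [w]) ! \<pi> y)(x := z)) \<psi>) (mset_set (verts n))"
proof -
  obtain m where m: "m \<le> k" "m \<notin> \<pi> ` ({1..Suc k} - {x})"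
    using exists_unused_slot[of "{1..Suc k} - {x}" k \<pi>] x by auto
  define \<pi>' where "\<pi>' y = (if y = x then k else transpose m k (\<pi> y))" for y
  have \<pi>': "\<forall>y. \<pi>' y \<le> k"
    using \<pi> m(1) by (simp add: \<pi>'_def transpose_def)
  have relocate: "sem n G' ((\<lambda>y. (vs' @ [u']) ! \<pi> y)(x := z)) \<psi> = sem n G' (\<lambda>y. (face vs' u' m @ [z]) ! \<pi>' y) \<psi>"
    if "length vs' = k" for G' vs' u' z
  proof (rule sem_cong_fv[OF wf], intro ballI)
    fix y assume y: "y \<in> fv \<psi>"
    show "((\<lambda>y. (vs' @ [u']) ! \<pi> y)(x := z)) y = (face vs' u' m @ [z]) ! \<pi>' y"
    proof (cases "y = x")
      case True
      then show ?thesis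
        using that by (simp add: \<pi>'_def nth_append face_def)
    next
      case False
      with y vars fv_subset_vars m have "\<pi> y \<noteq> m"
        by blast
      with False show ?thesis
        using nth_face_transpose(1)[OF that m(1), of "\<pi> y"] \<pi> by (simp add: \<pi>'_def)
    qed
  qed
  have "image_mset (\<lambda>z. sem n G (\<lambda>y. (face vs u m @ [z]) ! \<pi>' y) \<psi>) (mset_set (verts n))
      = image_mset (\<lambda>z. sem n H (\<lambda>y. (face ws w m @ [z]) ! \<pi>' y) \<psi>) (mset_set (verts n))"
    by (rule image_mset_eq_transfer[OF ext_labs_of_face_eq[OF ext len m(1)]])
      (use IH[of "face vs u m" "face ws w m" \<pi>'] \<pi>' len in simp)
  then show ?thesis
    using relocate len by simp
qed

lemma guarded_values_eq:
  assumes IH: "\<And>vs ws u w. length vs = k \<Longrightarrow> length ws = k \<Longrightarrow> ext_lab n t G vs u = ext_lab n t H ws w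
      \<Longrightarrow> sem n G (\<lambda>_. u) \<psi> = sem n H (\<lambda>_. w) \<psi>"
    and "k \<ge> 1" "wf_graph n l G" "wf_graph n l H"
    and len: "length vs = k" "length ws = k" and p: "p \<le> k"
    and ext: "ext_lab n (Suc t) G vs u = ext_lab n (Suc t) H ws w"
  shows "image_mset (\<lambda>z. sem n G (\<lambda>_. z) \<psi>) (mset_set (nbrs n G ((vs @ [u]) ! p)))
       = image_mset (\<lambda>z. sem n H (\<lambda>_. z) \<psi>) (mset_set (nbrs n H ((ws @ [w]) ! p)))"
proof -
  obtain m where m: "m \<le> k" "p \<noteq> m"
    using exists_unused_slot[of "{p}" k id] \<open>k \<ge> 1\<close> by auto
  define q where "q = transpose m k p"
  have q: "q < k"
    using nth_face_transpose(2)[OF len(1) m(1) p m(2)] by (simp add: q_def)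
  have guard: "face vs u m ! q = (vs @ [u]) ! p" "face ws w m ! q = (ws @ [w]) ! p"
    using nth_face_transpose(1)[OF len(1) m(1) p m(2), of u 0] nth_face_transpose(1)[OF len(2) m(1) p m(2), of w 0] q len
    by (simp_all add: q_def nth_append)
  have "image_mset (ext_lab n t G (face vs u m)) (filter_mset (adj G (face vs u m ! q)) (mset_set (verts n)))
      = image_mset (ext_lab n t H (face ws w m)) (filter_mset (adj H (face ws w m ! q)) (mset_set (verts n)))"
  proof (rule image_mset_filter_eq_transfer[OF ext_labs_of_face_eq[OF ext len m(1)]])
    fix z z' assume "ext_lab n t G (face vs u m) z = ext_lab n t H (face ws w m) z'"
    from ext_lab_eq_nth[OF this, of q k] show "adj G (face vs u m ! q) z \<longleftrightarrow> adj H (face ws w m ! q) z'"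
      using assms(3,4) q len by (simp add: nth_append)
  qed
  then have "image_mset (\<lambda>z. sem n G (\<lambda>_. z) \<psi>) (filter_mset (adj G (face vs u m ! q)) (mset_set (verts n)))
      = image_mset (\<lambda>z. sem n H (\<lambda>_. z) \<psi>) (filter_mset (adj H (face ws w m ! q)) (mset_set (verts n)))"
    by (rule image_mset_eq_transfer) (use IH[of "face vs u m" "face ws w m"] len in simp)
  then show ?thesis
    by (simp add: mset_set_nbrs guard)
qed

lemma sem_eq_if_ext_lab_eq:
  assumes "k \<ge> 1" and wfG: "wf_graph n l G" and wfH: "wf_graph n l H"
  shows "wf_tl l Om Th \<phi> \<Longrightarrow> vars \<phi> \<subseteq> {1..Suc k} \<Longrightarrow> depth \<phi> \<le> t
    \<Longrightarrow> length vs = k \<Longrightarrow> length ws = k \<Longrightarrow> \<forall>y. \<pi> y \<le> k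
    \<Longrightarrow> ext_lab n t G vs u = ext_lab n t H ws w
    \<Longrightarrow> sem n G (\<lambda>y. (vs @ [u]) ! \<pi> y) \<phi> = sem n H (\<lambda>y. (ws @ [w]) ! \<pi> y) \<phi>"
proof (induction \<phi> arbitrary: t vs ws u w \<pi>)
  case (EqV x y)
  then show ?case
    using ext_lab_eq_nth[OF EqV.prems(7) _ _ _ wfG wfH, of "\<pi> x" "\<pi> y"] by simp
next
  case (NeqV x y)
  then show ?case
    using ext_lab_eq_nth[OF NeqV.prems(7) _ _ _ wfG wfH, of "\<pi> x" "\<pi> y"] by simp
next
  case (Edge x y)
  then show ?case
    using ext_lab_eq_nth[OF Edge.prems(7) _ _ _ wfG wfH, of "\<pi> x" "\<pi> y"] by simp
next
  case (Pcol s x)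
  then show ?case
    using ext_lab_eq_nth[OF Pcol.prems(7) _ _ _ wfG wfH, of "\<pi> x" "\<pi> x"] by simp
next
  case (Fun f args)
  show ?case
  proof (rule sem_Fun_cong)
    fix a assume a: "a \<in> set args"
    with Fun.prems show "sem n G (\<lambda>y. (vs @ [u]) ! \<pi> y) a = sem n H (\<lambda>y. (ws @ [w]) ! \<pi> y) a"
      using depth_arg_le[OF a, of f] by (intro Fun.IH[OF a]) (auto simp del: depth.simps)
  qed
next
  case (Sum x a)
  then obtain t' where "t = Suc t'" "depth a \<le> t'"
    by (cases t) auto
  with Sum have "image_mset (\<lambda>z. sem n G ((\<lambda>y. (vs @ [u]) ! \<pi> y)(x := z)) a) (mset_set (verts n))
      = image_mset (\<lambda>z. sem n H ((\<lambda>y. (ws @ [w]) ! \<pi> y)(x := z)) a) (mset_set (verts n))"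
    by (intro binder_values_eq[where t = t']) auto
  then show ?case
    by (simp add: sum_unfold_sum_mset)
next
  case (Aggr F x a)
  then obtain t' where "t = Suc t'" "depth a \<le> t'"
    by (cases t) auto
  with Aggr have "image_mset (\<lambda>z. sem n G ((\<lambda>y. (vs @ [u]) ! \<pi> y)(x := z)) a) (mset_set (verts n))
      = image_mset (\<lambda>z. sem n H ((\<lambda>y. (ws @ [w]) ! \<pi> y)(x := z)) a) (mset_set (verts n))"
    by (intro binder_values_eq[where t = t']) auto
  then show ?case
    by simp
next
  case (AggrN F i j a)
  then obtain t' where t': "t = Suc t'" "depth a \<le> t'"
    by (cases t) auto
  have fv: "fv a \<subseteq> {j}" and wf: "wf_tl l Om Th a"
    using AggrN.prems(1) by simp_all
  have "image_mset (\<lambda>z. sem n G (\<lambda>_. z) a) (mset_set (nbrs n G ((vs @ [u]) ! \<pi> i)))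
      = image_mset (\<lambda>z. sem n H (\<lambda>_. z) a) (mset_set (nbrs n H ((ws @ [w]) ! \<pi> i)))"
    using AggrN.IH[OF wf _ t'(2), of _ _ "\<lambda>_. k"] AggrN.prems t'
    by (intro guarded_values_eq[OF _ assms]) (auto simp: nth_append)
  moreover have "sem n G' (\<nu>(j := z)) a = sem n G' (\<lambda>_. z) a" for G' \<nu> z
    using fv by (intro sem_cong_fv[OF wf]) auto
  ultimately show ?case
    by simp
next
  case (Mul a b)
  then have "sem n G (\<lambda>y. (vs @ [u]) ! \<pi> y) a = sem n H (\<lambda>y. (ws @ [w]) ! \<pi> y) a"
    "sem n G (\<lambda>y. (vs @ [u]) ! \<pi> y) b = sem n H (\<lambda>y. (ws @ [w]) ! \<pi> y) b"
    by (auto intro!: Mul.IH)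
  then show ?case
    by simp
next
  case (Add a b)
  then have "sem n G (\<lambda>y. (vs @ [u]) ! \<pi> y) a = sem n H (\<lambda>y. (ws @ [w]) ! \<pi> y) a"
    "sem n G (\<lambda>y. (vs @ [u]) ! \<pi> y) b = sem n H (\<lambda>y. (ws @ [w]) ! \<pi> y) b"
    by (auto intro!: Add.IH)
  then show ?case
    by simp
qed simp

lemma ext_lab_replicate_eq:
  assumes "k \<ge> 1" "wf_graph n l G" "wf_graph n l H"
    and eq: "wl n t G (replicate k z) = wl n t H (replicate k z')"
  shows "ext_lab n t G (replicate k z) z = ext_lab n t H (replicate k z') z'"
proof -
  have "atp G (replicate k z) = atp H (replicate k z')"
    by (metis eq lab_atp_wl)
  then have "col G z = col H z'"
    using \<open>k \<ge> 1\<close> by (cases k) (simp_all add: atp_index_pairs)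
  then have "atp G (replicate (Suc k) z) = atp H (replicate (Suc k) z')"
    by (intro atp_replicate_eq[OF assms(2,3)])
  moreover have "(replicate k v)[i := v] = replicate k v" for i and v :: nat
    by (induction k arbitrary: i) (auto split: nat.split)
  ultimately show ?thesis
    using eq by (simp add: ext_lab_def replicate_append_same)
qed

lemma sem_eq_if_vwl_eq:
  assumes "k \<ge> 1" "wf_graph n l G" "wf_graph n l H"
    and "wl n t G (replicate k z) = wl n t H (replicate k z')" and "\<phi> \<in> TL l Om Th (k + 1) t"
  shows "sem n G (\<lambda>_. z) \<phi> = sem n H (\<lambda>_. z') \<phi>"
proof -
  have "sem n G (\<lambda>_. (replicate k z @ [z]) ! 0) \<phi> = sem n H (\<lambda>_. (replicate k z' @ [z']) ! 0) \<phi>"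
    using assms ext_lab_replicate_eq[OF assms(1-4)]
    by (intro sem_eq_if_ext_lab_eq[OF assms(1-3), where \<pi> = "\<lambda>_. 0"]) (auto simp: TL_def)
  then show ?thesis
    using \<open>k \<ge> 1\<close> by (simp add: nth_append)
qed

lemma rho1_vwl_subset_rho1_TL:
  "k \<ge> 1 \<Longrightarrow> rho1_lab n l (vwl n k t) \<subseteq> rho1_tl n l (TL l Om Th (k + 1) t)"
  by (auto simp: rho1_lab_def rho1_tl_def vwl_def intro: sem_eq_if_vwl_eq)

section \<open>Graph-level k-WL\<close>

definition diag_lab :: "wllab \<Rightarrow> bool" where
  "diag_lab c \<longleftrightarrow> (\<forall>p \<in> set (fst (lab_atp c)). fst p)"

lemma diag_lab_wl_iff:
  assumes "length vs = k" "k \<ge> 1"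
  shows "diag_lab (wl n t G vs) \<longleftrightarrow> vs = replicate k (vs ! 0)"
proof -
  have "diag_lab (wl n t G vs) \<longleftrightarrow> (\<forall>i j. i < j \<and> j < k \<longrightarrow> vs ! i = vs ! j)"
    using assms(1) by (auto simp: diag_lab_def lab_atp_wl atp_index_pairs set_index_pairs)
  also have "\<dots> \<longleftrightarrow> vs = replicate k (vs ! 0)"
  proof
    assume const: "\<forall>i j. i < j \<and> j < k \<longrightarrow> vs ! i = vs ! j"
    show "vs = replicate k (vs ! 0)"
    proof (rule nth_equalityI)
      fix i assume "i < length vs"
      then show "vs ! i = replicate k (vs ! 0) ! i"
        using const[rule_format, of 0 i] assms by (cases "i = 0") auto
    qed (use assms in simp)
  next
    assume "vs = replicate k (vs ! 0)"
    then show "\<forall>i j. i < j \<and> j < k \<longrightarrow> vs ! i = vs ! j"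
      by (metis nth_replicate order.strict_trans)
  qed
  finally show ?thesis .
qed

lemma diagonal_of_gwl:
  assumes "k \<ge> 1"
  shows "filter_mset diag_lab (gwl n k t G) = image_mset (\<lambda>z. wl n t G (replicate k z)) (mset_set (verts n))"
proof -
  let ?T = "{vs. length vs = k \<and> set vs \<subseteq> verts n}"
  have "finite ?T"
    using finite_lists_length_eq[of "verts n" k] by (simp add: conj_commute)
  moreover have "{vs \<in> ?T. diag_lab (wl n t G vs)} = replicate k ` verts n"
  proof (intro equalityI subsetI)
    fix vs assume "vs \<in> {vs \<in> ?T. diag_lab (wl n t G vs)}"
    then have vs: "length vs = k" "set vs \<subseteq> verts n" "diag_lab (wl n t G vs)"
      by auto
    then have "vs ! 0 \<in> set vs"
      using assms by (intro nth_mem) simp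
    with vs(2) have "vs ! 0 \<in> verts n"
      by blast
    moreover have "vs = replicate k (vs ! 0)"
      using vs diag_lab_wl_iff[OF vs(1) assms] by blast
    ultimately show "vs \<in> replicate k ` verts n"
      by blast
  next
    fix vs assume "vs \<in> replicate k ` verts n"
    then obtain z where "vs = replicate k z" "z \<in> verts n"
      by blast
    then show "vs \<in> {vs \<in> ?T. diag_lab (wl n t G vs)}"
      using diag_lab_wl_iff[of vs k n t G] assms by auto
  qed
  moreover have "inj_on (replicate k) (verts n)"
    using assms by (auto simp: inj_on_def replicate_eq_replicate)
  ultimately show ?thesis
    by (simp add: gwl_def filter_mset_image_mset image_mset_mset_set[symmetric] multiset.map_comp o_def)
qed

lemma vertex_values_eq_if_diagonal_eq:
  assumes "k \<ge> 1" "wf_graph n l G" "wf_graph n l H"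
    and diag_eq: "image_mset (\<lambda>z. wl n t G (replicate k z)) (mset_set (verts n))
           = image_mset (\<lambda>z. wl n t H (replicate k z)) (mset_set (verts n))"
    and a: "a \<in> TL l Om Th (k + 1) t" and fv: "fv a \<subseteq> {x}"
  shows "image_mset (\<lambda>z. sem n G (\<nu>(x := z)) a) (mset_set (verts n))
       = image_mset (\<lambda>z. sem n H (\<mu>(x := z)) a) (mset_set (verts n))"
proof -
  have "sem n G' (\<nu>'(x := z)) a = sem n G' (\<lambda>_. z) a" for G' \<nu>' z
    using a fv by (intro sem_cong_fv[where l = l and Om = Om and Th = Th]) (auto simp: TL_def)
  moreover have "image_mset (\<lambda>z. sem n G (\<lambda>_. z) a) (mset_set (verts n))
      = image_mset (\<lambda>z. sem n H (\<lambda>_. z) a) (mset_set (verts n))"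
    by (rule image_mset_eq_transfer[OF diag_eq]) (rule sem_eq_if_vwl_eq[OF assms(1-3) _ a])
  ultimately show ?thesis
    by simp
qed

lemma sem_closed_eq_if_diagonal_eq:
  assumes "k \<ge> 1" "wf_graph n l G" "wf_graph n l H"
    and "image_mset (\<lambda>z. wl n t G (replicate k z)) (mset_set (verts n))
       = image_mset (\<lambda>z. wl n t H (replicate k z)) (mset_set (verts n))"
  shows "\<phi> \<in> TL l Om Th (k + 1) (t + 1) \<Longrightarrow> fv \<phi> = {} \<Longrightarrow> sem n G \<nu> \<phi> = sem n H \<mu> \<phi>"
proof (induction \<phi> arbitrary: \<nu> \<mu>)
  case (Fun f args)
  show ?case
  proof (rule sem_Fun_cong)
    fix a assume a: "a \<in> set args"
    with Fun.prems show "sem n G \<nu> a = sem n H \<mu> a"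
      using depth_arg_le[OF a, of f] by (intro Fun.IH[OF a]) (auto simp: TL_def simp del: depth.simps)
  qed
next
  case (Sum x a)
  then have "a \<in> TL l Om Th (k + 1) t" "fv a \<subseteq> {x}"
    by (auto simp: TL_def)
  then show ?case
    using vertex_values_eq_if_diagonal_eq[OF assms, where x = x and \<nu> = \<nu> and \<mu> = \<mu>] by (simp add: sum_unfold_sum_mset)
next
  case (Aggr F x a)
  then have "a \<in> TL l Om Th (k + 1) t" "fv a \<subseteq> {x}"
    by (auto simp: TL_def)
  then show ?case
    using vertex_values_eq_if_diagonal_eq[OF assms, where x = x and \<nu> = \<nu> and \<mu> = \<mu>] by simp
next
  case (Mul a b)
  then have "sem n G \<nu> a = sem n H \<mu> a" "sem n G \<nu> b = sem n H \<mu> b"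
    by (auto simp: TL_def intro!: Mul.IH)
  then show ?case
    by simp
next
  case (Add a b)
  then have "sem n G \<nu> a = sem n H \<mu> a" "sem n G \<nu> b = sem n H \<mu> b"
    by (auto simp: TL_def intro!: Add.IH)
  then show ?case
    by simp
qed (auto simp: TL_def)

lemma rho0_gwl_subset_rho0_TL:
  assumes "k \<ge> 1"
  shows "rho0_lab n l (gwl n k t) \<subseteq> rho0_tl n l (TL l Om Th (k + 1) (t + 1))"
proof
  fix X assume "X \<in> rho0_lab n l (gwl n k t)"
  then obtain G H where X: "X = (G, H)" "wf_graph n l G" "wf_graph n l H" "gwl n k t G = gwl n k t H"
    unfolding rho0_lab_def by auto
  then have "image_mset (\<lambda>z. wl n t G (replicate k z)) (mset_set (verts n))
      = image_mset (\<lambda>z. wl n t H (replicate k z)) (mset_set (verts n))"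
    by (metis diagonal_of_gwl[OF assms])
  then show "X \<in> rho0_tl n l (TL l Om Th (k + 1) (t + 1))"
    using X sem_closed_eq_if_diagonal_eq[OF assms X(2,3)] by (auto simp: rho0_tl_def)
qed

theorem mainTheorem15:
  fixes n l t k :: nat
    and Om :: "(nat \<times> (real list \<Rightarrow> real)) set"
    and Th :: "(real multiset \<Rightarrow> real) set"
  assumes "n \<ge> 1" and "l \<ge> 1" and "k \<ge> 1"
  shows "rho1_lab n l (cr n t) \<subseteq> rho1_tl n l (GTL2 l Om Th t)
    \<and> rho1_lab n l (vwl n k t) \<subseteq> rho1_tl n l (TL l Om Th (k + 1) t)
    \<and> rho0_lab n l (gwl n k t) \<subseteq> rho0_tl n l (TL l Om Th (k + 1) (t + 1))"
  using rho1_cr_subset_rho1_GTL2 rho1_vwl_subset_rho1_TL[OF assms(3)] rho0_gwl_subset_rho0_TL[OF assms(3)]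
  by blast

end
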